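(* Let $(X,d)$ be a complete metric space with $|X|\geqslant 3$ and let $T\colon X\to X$ be asymptotically regular and satisfy, for some $\alpha\in[0,\frac12)$ and $\lambda\in[0,1)$, $$d(Tx,Ty)+d(Ty,Tz)+d(Tx,Tz)\leqslant \alpha\big(d(x,y)+d(y,z)+d(z,x)\big)+\lambda\big(d(x,Tx)+d(y,Ty)+d(z,Tz)\big)$$ for all pairwise distinct $x,y,z\in X$. Then $T$ has a fixed point, and $T$ has at most two fixed points.
   Context: A mapping $T\colon X\to X$ on a metric space is asymptotically regular if $\lim_{n\to\infty}d(T^{n+1}x,T^nx)=0$ for every $x\in X$. *)

theory Defs
  imports "HOL-Analysis.Analysis"
begin

definition asymptotically_regular :: "('a::metric_space \<Rightarrow> 'a) \<Rightarrow> bool" where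
  "asymptotically_regular T \<longleftrightarrow>
     (\<forall>x. (\<lambda>n. dist ((T ^^ Suc n) x) ((T ^^ n) x)) \<longlonglongrightarrow> 0)"

end

(* Along an orbit x (n+1) = T (x n) of a map without fixed points, the contraction
   condition applied to the triple x n, x m, x (n+1) bounds dist (x n) (x m) by a
   multiple of the step lengths at n, n+1 and m; asymptotic regularity makes these
   steps vanish, so the orbit is Cauchy.  Applied to the triple x n, x (n+1), p for
   the limit p, the condition bounds dist p (T p) by quantities tending to 0, so p is
   a fixed point.  Three distinct fixed points would give a triangle whose perimeter
   is at most alph times itself, impossible for alph < 1. *)
theory Submission
  imports Defs
begin

definition perimeter_contraction :: "('a::metric_space \<Rightarrow> 'a) \<Rightarrow> real \<Rightarrow> real \<Rightarrow> bool" where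
  "perimeter_contraction T alph lam \<longleftrightarrow>
     (\<forall>x y z. x \<noteq> y \<longrightarrow> y \<noteq> z \<longrightarrow> x \<noteq> z \<longrightarrow>
        dist (T x) (T y) + dist (T y) (T z) + dist (T x) (T z)
        \<le> alph * (dist x y + dist y z + dist z x) + lam * (dist x (T x) + dist y (T y) + dist z (T z)))"

lemma perimeter_contractionD:
  assumes "perimeter_contraction T alph lam" "x \<noteq> y" "y \<noteq> z" "x \<noteq> z"
  shows "dist (T x) (T y) + dist (T y) (T z) + dist (T x) (T z)
    \<le> alph * (dist x y + dist y z + dist z x) + lam * (dist x (T x) + dist y (T y) + dist z (T z))"
  using assms unfolding perimeter_contraction_def by blast

lemma finite_card_le_2_if_no_three_distinct:
  assumes "\<And>x y z. x \<in> S \<Longrightarrow> y \<in> S \<Longrightarrow> z \<in> S \<Longrightarrow> x = y \<or> y = z \<or> x = z"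
  shows "finite S \<and> card S \<le> 2"
proof (rule ccontr)
  assume "\<not> (finite S \<and> card S \<le> 2)"
  then obtain B where "B \<subseteq> S" "card B = 3"
    by (metis infinite_arbitrarily_large not_less_eq_eq numeral_3_eq_3 numeral_2_eq_2
        obtain_subset_with_card_n)
  then obtain x y z where "{x, y, z} \<subseteq> S" "x \<noteq> y" "y \<noteq> z" "x \<noteq> z"
    by (auto simp: card_3_iff)
  with assms show False by blast
qed

lemma perimeter_contraction_card_fixpoints_le_2:
  assumes pc: "perimeter_contraction T alph lam" and "alph < 1"
  shows "finite {x. T x = x} \<and> card {x. T x = x} \<le> 2"
proof (rule finite_card_le_2_if_no_three_distinct, rule ccontr)
  fix u v w assume "u \<in> {x. T x = x}" "v \<in> {x. T x = x}" "w \<in> {x. T x = x}"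
    and "\<not> (u = v \<or> v = w \<or> u = w)"
  then have fixed: "T u = u" "T v = v" "T w = w" and "u \<noteq> v" "v \<noteq> w" "u \<noteq> w" by auto
  define s where "s = dist u v + dist v w + dist w u"
  have "s \<le> alph * s"
    using perimeter_contractionD[OF pc \<open>u \<noteq> v\<close> \<open>v \<noteq> w\<close> \<open>u \<noteq> w\<close>]
    by (simp add: fixed s_def dist_commute)
  moreover have "s > 0"
    using \<open>u \<noteq> v\<close> zero_le_dist[of v w] zero_le_dist[of w u] zero_less_dist_iff[of u v]
    unfolding s_def by linarith
  ultimately show False
    using \<open>alph < 1\<close> by (simp add: mult_le_cancel_right1)
qed

lemma perimeter_contraction_dist_le:
  assumes pc: "perimeter_contraction T alph lam" and "0 \<le> alph" "0 \<le> lam" and "T u \<noteq> u"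
  shows "(2 - 2 * alph) * dist u v
    \<le> (2 + 2 * alph + lam) * dist u (T u) + lam * dist (T u) (T (T u)) + (2 + lam) * dist v (T v)"
proof -
  consider "v = u" | "v = T u" | "v \<noteq> u" "v \<noteq> T u" by blast
  then show ?thesis
  proof cases
    case 1
    then show ?thesis using assms by simp
  next
    case 2
    then show ?thesis using assms by (simp add: dist_commute algebra_simps)
  next
    case 3
    have contr: "dist (T u) (T v) + dist (T v) (T (T u)) + dist (T u) (T (T u))
      \<le> alph * (dist u v + dist v (T u) + dist (T u) u)
         + lam * (dist u (T u) + dist v (T v) + dist (T u) (T (T u)))"
      using perimeter_contractionD[OF pc, of u v "T u"] 3 \<open>T u \<noteq> u\<close> by auto
    have "dist u v \<le> dist u (T u) + dist (T u) (T v) + dist v (T v)"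
      using dist_triangle[of u v "T u"] dist_triangle[of "T u" v "T v"] by (simp add: dist_commute)
    moreover have "dist u v \<le> dist u (T u) + dist (T u) (T (T u)) + dist (T v) (T (T u)) + dist v (T v)"
      using dist_triangle[of u v "T u"] dist_triangle[of "T u" v "T (T u)"]
        dist_triangle[of "T (T u)" v "T v"]
      by (simp add: dist_commute)
    moreover have "alph * dist v (T u) \<le> alph * (dist u v + dist u (T u))"
      using \<open>0 \<le> alph\<close> dist_triangle[of v "T u" u] by (intro mult_left_mono) (auto simp: dist_commute)
    ultimately show ?thesis
      using contr by (simp add: dist_commute algebra_simps)
  qed
qed

lemma perimeter_contraction_dist_fixpoint_le:
  assumes pc: "perimeter_contraction T alph lam" and "T u \<noteq> u" "p \<noteq> u" "p \<noteq> T u"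
  shows "(2 - lam) * dist p (T p) + dist (T u) (T (T u))
    \<le> dist p (T u) + dist p (T (T u)) + alph * (dist u (T u) + dist (T u) p + dist p u)
       + lam * (dist u (T u) + dist (T u) (T (T u)))"
proof -
  have contr: "dist (T u) (T (T u)) + dist (T (T u)) (T p) + dist (T u) (T p)
    \<le> alph * (dist u (T u) + dist (T u) p + dist p u)
       + lam * (dist u (T u) + dist (T u) (T (T u)) + dist p (T p))"
    using perimeter_contractionD[OF pc, of u "T u" p] assms by auto
  have "dist p (T p) \<le> dist p (T u) + dist (T u) (T p)"
    by (rule dist_triangle)
  moreover have "dist p (T p) \<le> dist p (T (T u)) + dist (T (T u)) (T p)"
    by (rule dist_triangle)
  ultimately show ?thesis
    using contr by (simp add: algebra_simps)
qed

lemma Cauchy_if_dist_le_null: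
  fixes x :: "nat \<Rightarrow> 'a::metric_space"
  assumes dist_le: "\<And>m n. dist (x m) (x n) \<le> b m + b n" and "b \<longlonglongrightarrow> 0"
  shows "Cauchy x"
proof (rule metric_CauchyI)
  fix e :: real assume "e > 0"
  then obtain N where N: "\<And>n. n \<ge> N \<Longrightarrow> b n < e / 2"
    using \<open>b \<longlonglongrightarrow> 0\<close> unfolding LIMSEQ_def dist_real_def
    by (metis abs_less_iff diff_zero half_gt_zero)
  have "dist (x m) (x n) < e" if "m \<ge> N" "n \<ge> N" for m n
    using dist_le[of m n] N[OF that(1)] N[OF that(2)] by linarith
  then show "\<exists>M. \<forall>m\<ge>M. \<forall>n\<ge>M. dist (x m) (x n) < e" by blast
qed

lemma perimeter_contraction_orbit_Cauchy:
  assumes pc: "perimeter_contraction T alph lam" and "0 \<le> alph" "alph < 1" "0 \<le> lam"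
    and orbit: "\<And>n. x (Suc n) = T (x n)"
    and no_fix: "\<And>n. T (x n) \<noteq> x n"
    and step: "(\<lambda>n. dist (x n) (x (Suc n))) \<longlonglongrightarrow> 0"
  shows "Cauchy x"
proof -
  define a where "a n = dist (x n) (x (Suc n))" for n
  define K where "K = (2 + 2 * alph + lam) / (2 - 2 * alph)"
  show ?thesis
  proof (rule Cauchy_if_dist_le_null)
    fix m n
    have "(2 - 2 * alph) * dist (x m) (x n)
      \<le> (2 + 2 * alph + lam) * a m + lam * a (Suc m) + (2 + lam) * a n"
      using perimeter_contraction_dist_le[OF pc \<open>0 \<le> alph\<close> \<open>0 \<le> lam\<close> no_fix, of m "x n"]
      by (simp add: a_def orbit)
    also have "\<dots> \<le> (2 + 2 * alph + lam) * (a m + a (Suc m) + a n + a (Suc n))"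
    proof -
      have "lam * a (Suc m) \<le> (2 + 2 * alph + lam) * a (Suc m)"
        "(2 + lam) * a n \<le> (2 + 2 * alph + lam) * a n"
        "0 \<le> (2 + 2 * alph + lam) * a (Suc n)"
        using \<open>0 \<le> alph\<close> \<open>0 \<le> lam\<close> by (simp_all add: a_def mult_right_mono)
      then show ?thesis by (simp add: distrib_left)
    qed
    finally have "dist (x m) (x n) \<le> K * (a m + a (Suc m) + a n + a (Suc n))"
      using \<open>alph < 1\<close> by (simp add: K_def pos_le_divide_eq mult.commute)
    then show "dist (x m) (x n) \<le> K * (a m + a (Suc m)) + K * (a n + a (Suc n))"
      by (simp add: distrib_left)
  next
    have "a \<longlonglongrightarrow> 0" using step by (simp add: a_def[abs_def])
    then have "(\<lambda>n. a n + a (Suc n)) \<longlonglongrightarrow> 0"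
      using LIMSEQ_Suc tendsto_add_zero by blast
    then show "(\<lambda>n. K * (a n + a (Suc n))) \<longlonglongrightarrow> 0"
      by (rule tendsto_mult_right_zero)
  qed
qed

lemma perimeter_contraction_orbit_limit_fixpoint:
  assumes pc: "perimeter_contraction T alph lam" and "0 \<le> alph" "0 \<le> lam" "lam \<le> 1"
    and orbit: "\<And>n. x (Suc n) = T (x n)"
    and no_fix: "\<And>n. T (x n) \<noteq> x n"
    and step: "(\<lambda>n. dist (x n) (x (Suc n))) \<longlonglongrightarrow> 0"
    and lim: "x \<longlonglongrightarrow> p"
  shows "T p = p"
proof -
  define a where "a n = dist (x n) (x (Suc n))" for n
  define e where "e n = dist (x n) p" for n
  define b where "b n = a n + a (Suc n) + e (Suc n) + e (Suc (Suc n))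
    + alph * (a n + e (Suc n) + e n) + lam * a n" for n
  have b_ge: "a n \<le> b n" "a (Suc n) \<le> b n" for n
  proof -
    have "0 \<le> alph * (a n + e (Suc n) + e n) + lam * a n"
      using assms by (simp add: a_def e_def)
    moreover have "0 \<le> a n" "0 \<le> a (Suc n)" "0 \<le> e (Suc n)" "0 \<le> e (Suc (Suc n))"
      by (simp_all add: a_def e_def)
    ultimately show "a n \<le> b n" "a (Suc n) \<le> b n"
      unfolding b_def by linarith+
  qed
  have "dist p (T p) \<le> b n" for n
  proof -
    consider "p = x n" | "p = x (Suc n)" | "p \<noteq> x n" "p \<noteq> x (Suc n)" by blast
    then show ?thesis
    proof cases
      case 1
      then show ?thesis using b_ge(1)[of n] by (simp add: a_def orbit)
    next
      case 2
      then show ?thesis using b_ge(2)[of n] by (simp add: a_def orbit)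
    next
      case 3
      have "(2 - lam) * dist p (T p) + a (Suc n)
        \<le> e (Suc n) + e (Suc (Suc n)) + alph * (a n + e (Suc n) + e n) + lam * (a n + a (Suc n))"
        using perimeter_contraction_dist_fixpoint_le[OF pc no_fix, of p n] 3
        by (simp add: a_def e_def orbit[symmetric] dist_commute)
      moreover have "dist p (T p) \<le> (2 - lam) * dist p (T p)"
        using \<open>0 \<le> lam\<close> \<open>lam \<le> 1\<close> by (simp add: mult_left_le_one_le left_diff_distrib)
      moreover have "lam * a (Suc n) \<le> a (Suc n)"
        using \<open>0 \<le> lam\<close> \<open>lam \<le> 1\<close> by (simp add: a_def mult_left_le_one_le)
      moreover have "0 \<le> a n" "0 \<le> a (Suc n)" unfolding a_def by (rule zero_le_dist)+
      ultimately show ?thesis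
        unfolding b_def distrib_left by linarith
    qed
  qed
  moreover have "b \<longlonglongrightarrow> 0"
  proof -
    have a0: "a \<longlonglongrightarrow> 0"
      using step by (simp add: a_def[abs_def])
    have e0: "e \<longlonglongrightarrow> 0"
      unfolding e_def[abs_def] using lim by (rule tendsto_dist_iff[THEN iffD1])
    have "b \<longlonglongrightarrow> 0 + 0 + 0 + 0 + alph * (0 + 0 + 0) + lam * 0"
      unfolding b_def[abs_def] by (intro tendsto_add tendsto_mult_left a0 e0 LIMSEQ_Suc)
    then show ?thesis by simp
  qed
  ultimately have "dist p (T p) \<le> 0"
    using LIMSEQ_le_const by blast
  then show "T p = p" by simp
qed

theorem theorem4p3:
  fixes T :: "'a::complete_space \<Rightarrow> 'a" and alph lam :: real
  assumes card3: "\<exists>a b c::'a. a \<noteq> b \<and> b \<noteq> c \<and> a \<noteq> c"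
    and ar: "asymptotically_regular T"
    and alpha: "0 \<le> alph" "alph < 1/2"
    and lambda: "0 \<le> lam" "lam < 1"
    and contr: "\<And>x y z. x \<noteq> y \<Longrightarrow> y \<noteq> z \<Longrightarrow> x \<noteq> z \<Longrightarrow>
        dist (T x) (T y) + dist (T y) (T z) + dist (T x) (T z)
        \<le> alph * (dist x y + dist y z + dist z x) + lam * (dist x (T x) + dist y (T y) + dist z (T z))"
  shows "(\<exists>x. T x = x) \<and> finite {x. T x = x} \<and> card {x. T x = x} \<le> 2"
proof -
  have pc: "perimeter_contraction T alph lam"
    using contr unfolding perimeter_contraction_def by blast
  have "\<exists>p. T p = p"
  proof -
    fix x0 :: 'a
    define x where "x n = (T ^^ n) x0" for n
    have orbit: "x (Suc n) = T (x n)" for n by (simp add: x_def)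
    show ?thesis
    proof (cases "\<exists>n. T (x n) = x n")
      case False
      have step: "(\<lambda>n. dist (x n) (x (Suc n))) \<longlonglongrightarrow> 0"
        using ar unfolding asymptotically_regular_def x_def by (simp add: dist_commute)
      have "Cauchy x"
        using perimeter_contraction_orbit_Cauchy[OF pc _ _ _ orbit _ step] alpha lambda False by auto
      then obtain p where "x \<longlonglongrightarrow> p" using convergent_eq_Cauchy by blast
      then have "T p = p"
        using perimeter_contraction_orbit_limit_fixpoint[OF pc _ _ _ orbit _ step] alpha lambda False
        by auto
      then show ?thesis ..
    qed blast
  qed
  moreover have "finite {x. T x = x} \<and> card {x. T x = x} \<le> 2"
    using perimeter_contraction_card_fixpoints_le_2[OF pc] alpha by simp
  ultimately show ?thesis by blast
qed

end
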